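(* Let $Q$ be a countable weak-latin quandle and $<$ a right order on $Q$. Then there is an injective quandle homomorphism $\rho:Q\hookrightarrow\mathrm{Conj}(\mathrm{Homeo}_+(\mathbb{R}))$, i.e. an injective map with $\rho(r*s)=\rho(s)\circ\rho(r)\circ\rho(s)^{-1}$ for all $r,s\in Q$.
   Context: Quandle: set $Q$ with operation $*$ satisfying $q*q=q$, unique right division, and $(q*r)*s=(q*s)*(r*s)$. Weak-latin: for any $q,r\in Q$ there exists $\hat q\in Q$ such that $\hat q*q=\hat q*r$ implies $q=r$. A right order is a total order $<$ on $Q$ with $q_1<q_2\Rightarrow q_1*q<q_2*q$ for all $q$. Homeomorphisms act on the right; $\mathrm{Conj}(\mathrm{Homeo}_+(\mathbb{R}))$ is the quandle structure $f*g=g\circ f\circ g^{-1}$ on $\mathrm{Homeo}_+(\mathbb{R})$. *)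

theory Defs
  imports "HOL-Analysis.Analysis"
begin

definition quandle :: "'a set \<Rightarrow> ('a \<Rightarrow> 'a \<Rightarrow> 'a) \<Rightarrow> bool" where
  "quandle Q op \<longleftrightarrow>
     (\<forall>q\<in>Q. \<forall>r\<in>Q. op q r \<in> Q) \<and>
     (\<forall>q\<in>Q. op q q = q) \<and>
     (\<forall>q\<in>Q. \<forall>r\<in>Q. \<exists>!p. p \<in> Q \<and> op p r = q) \<and>
     (\<forall>q\<in>Q. \<forall>r\<in>Q. \<forall>s\<in>Q. op (op q r) s = op (op q s) (op r s))"

definition weak_latin :: "'a set \<Rightarrow> ('a \<Rightarrow> 'a \<Rightarrow> 'a) \<Rightarrow> bool" where
  "weak_latin Q op \<longleftrightarrow>
     (\<forall>q\<in>Q. \<forall>r\<in>Q. \<exists>qh\<in>Q. op qh q = op qh r \<longrightarrow> q = r)"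

definition right_order :: "'a set \<Rightarrow> ('a \<Rightarrow> 'a \<Rightarrow> 'a) \<Rightarrow> ('a \<Rightarrow> 'a \<Rightarrow> bool) \<Rightarrow> bool" where
  "right_order Q op lt \<longleftrightarrow>
     (\<forall>q\<in>Q. \<not> lt q q) \<and>
     (\<forall>a\<in>Q. \<forall>b\<in>Q. \<forall>c\<in>Q. lt a b \<and> lt b c \<longrightarrow> lt a c) \<and>
     (\<forall>a\<in>Q. \<forall>b\<in>Q. a \<noteq> b \<longrightarrow> lt a b \<or> lt b a) \<and>
     (\<forall>q1\<in>Q. \<forall>q2\<in>Q. \<forall>q\<in>Q. lt q1 q2 \<longrightarrow> lt (op q1 q) (op q2 q))"

definition Homeo_plus :: "(real \<Rightarrow> real) set" where
  "Homeo_plus = {f. (\<exists>g. homeomorphism UNIV UNIV f g) \<and> strict_mono f}"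

end

theory Submission
  imports Defs
begin

text \<open>
  Enumerate \<open>Q\<close> and give its \<open>n\<close>-th element the weight \<open>2\<^sup>-\<^sup>n\<close>. Place closed intervals
  \<open>I\<^sub>q\<close> of these lengths side by side in \<open>[0, T]\<close>, \<open>T\<close> the total weight, in the order of
  \<open>Q\<close>: \<open>I\<^sub>q\<close> starts at the total weight of the elements below \<open>q\<close>. An order automorphism
  \<open>f\<close> of \<open>(Q, <)\<close> is realized by the increasing homeomorphism of the line that maps each
  \<open>I\<^sub>q\<close> affinely onto \<open>I\<^sub>f\<^sub>q\<close>, sends a point lying in no interval to the total weight of
  the images of the elements on its left, and is the identity outside \<open>[0, T]\<close>. Realization
  respects composition and identity, and it determines \<open>f\<close>, since it sends the left end of
  \<open>I\<^sub>q\<close> to that of \<open>I\<^sub>f\<^sub>q\<close>. In a right ordered quandle the right translations are order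
  automorphisms; realizing their inverses turns right self-distributivity into the
  conjugation law, and weak latinity makes the resulting map injective.
\<close>

lemma strict_mono_surj_imp_continuous:
  fixes f :: "real \<Rightarrow> real"
  assumes mono: "strict_mono f" and surj: "surj f"
  shows "continuous_on UNIV f"
proof -
  have "isCont f x" for x
    unfolding continuous_at_real_range
  proof (intro allI impI)
    fix e :: real assume "e > 0"
    obtain a b where a: "f a = f x - e" and b: "f b = f x + e"
      using surj by (metis surjD)
    have "a < x" "x < b"
      using a b \<open>e > 0\<close> strict_mono_less[OF mono] by fastforce+
    show "\<exists>d>0. \<forall>y. norm (y - x) < d \<longrightarrow> \<bar>f y - f x\<bar> < e"
    proof (intro exI[of _ "min (x - a) (b - x)"] conjI allI impI)
      show "0 < min (x - a) (b - x)" using \<open>a < x\<close> \<open>x < b\<close> by simp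
      fix y assume "norm (y - x) < min (x - a) (b - x)"
      then have "f a < f y" "f y < f b" using mono by (auto simp: strict_mono_less)
      then show "\<bar>f y - f x\<bar> < e" using a b by auto
    qed
  qed
  then show ?thesis by (simp add: continuous_at_imp_continuous_on)
qed

lemma Homeo_plusI:
  fixes f g :: "real \<Rightarrow> real"
  assumes "mono f" "mono g" and fg: "\<And>x. f (g x) = x" and gf: "\<And>x. g (f x) = x"
  shows "f \<in> Homeo_plus"
proof -
  have "inj f" "inj g"
    using fg gf by (auto intro: inj_on_inverseI)
  moreover have "surj f" "surj g"
    using surjI[of g f] surjI[of f g] fg gf by auto
  ultimately have "strict_mono f" "strict_mono g"
    using assms(1,2) mono_imp_strict_mono by blast+
  then have "homeomorphism UNIV UNIV f g"
    using \<open>surj f\<close> \<open>surj g\<close> fg gf strict_mono_surj_imp_continuous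
    unfolding homeomorphism_def by auto
  then show ?thesis
    unfolding Homeo_plus_def using \<open>strict_mono f\<close> by auto
qed

lemma quandle_closed:
  assumes "quandle Q op" "q \<in> Q" "r \<in> Q"
  shows "op q r \<in> Q"
  using assms unfolding quandle_def by simp

lemma quandle_right_div:
  assumes "quandle Q op" "q \<in> Q" "r \<in> Q"
  shows "\<exists>!p. p \<in> Q \<and> op p r = q"
proof -
  have "\<forall>q\<in>Q. \<forall>r\<in>Q. \<exists>!p. p \<in> Q \<and> op p r = q"
    using assms(1) unfolding quandle_def by (elim conjE)
  then show ?thesis using assms(2,3) by simp
qed

lemma quandle_right_distrib:
  assumes "quandle Q op" "q \<in> Q" "r \<in> Q" "s \<in> Q"
  shows "op (op q r) s = op (op q s) (op r s)"
proof -
  have "\<forall>q\<in>Q. \<forall>r\<in>Q. \<forall>s\<in>Q. op (op q r) s = op (op q s) (op r s)"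
    using assms(1) unfolding quandle_def by (elim conjE)
  then show ?thesis using assms(2-4) by simp
qed

lemma quandle_right_translation_bij:
  assumes "quandle Q op" and "s \<in> Q"
  shows "bij_betw (\<lambda>p. op p s) Q Q"
proof (rule bij_betw_imageI)
  show "inj_on (\<lambda>p. op p s) Q"
  proof (rule inj_onI)
    fix a b assume "a \<in> Q" "b \<in> Q" "op a s = op b s"
    have "\<exists>!p. p \<in> Q \<and> op p s = op a s"
      using assms \<open>a \<in> Q\<close> quandle_closed by (intro quandle_right_div) simp_all
    then obtain c where "\<forall>y. y \<in> Q \<and> op y s = op a s \<longrightarrow> y = c"
      by (rule ex1E) blast
    then show "a = b"
      using \<open>a \<in> Q\<close> \<open>b \<in> Q\<close> \<open>op a s = op b s\<close> by metis
  qed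
  show "(\<lambda>p. op p s) ` Q = Q"
  proof
    show "(\<lambda>p. op p s) ` Q \<subseteq> Q"
      using quandle_closed[OF assms(1) _ assms(2)] by blast
    show "Q \<subseteq> (\<lambda>p. op p s) ` Q"
    proof
      fix q assume "q \<in> Q"
      then obtain p where "p \<in> Q" "op p s = q"
        using quandle_right_div[OF assms(1) _ assms(2)] by blast
      then show "q \<in> (\<lambda>p. op p s) ` Q" by blast
    qed
  qed
qed

lemma quandle_inv_right_translation_op:
  assumes quandle: "quandle Q op" and "r \<in> Q" "s \<in> Q" "p \<in> Q"
  shows "inv_into Q (\<lambda>p. op p (op r s)) p
           = op (inv_into Q (\<lambda>p. op p r) (inv_into Q (\<lambda>p. op p s) p)) s"
proof -
  note bij = quandle_right_translation_bij[OF quandle]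
  define u where "u = inv_into Q (\<lambda>p. op p s) p"
  define v where "v = inv_into Q (\<lambda>p. op p r) u"
  have "u \<in> Q" "op u s = p"
    using bij[OF \<open>s \<in> Q\<close>] \<open>p \<in> Q\<close> unfolding u_def bij_betw_def
    by (auto intro: inv_into_into f_inv_into_f)
  moreover have "v \<in> Q" "op v r = u"
    using bij[OF \<open>r \<in> Q\<close>] \<open>u \<in> Q\<close> unfolding v_def bij_betw_def
    by (auto intro: inv_into_into f_inv_into_f)
  ultimately have "op (op v s) (op r s) = p"
    using quandle_right_distrib[OF quandle \<open>v \<in> Q\<close> \<open>r \<in> Q\<close> \<open>s \<in> Q\<close>] by simp
  moreover have "inj_on (\<lambda>p. op p (op r s)) Q"
    using bij[OF quandle_closed[OF quandle \<open>r \<in> Q\<close> \<open>s \<in> Q\<close>]] by (simp add: bij_betw_def)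
  ultimately show ?thesis
    unfolding u_def[symmetric] v_def[symmetric]
    using quandle_closed[OF quandle \<open>v \<in> Q\<close> \<open>s \<in> Q\<close>] by (intro inv_into_f_eq)
qed

definition order_automorphism :: "'a set \<Rightarrow> ('a \<Rightarrow> 'a \<Rightarrow> bool) \<Rightarrow> ('a \<Rightarrow> 'a) \<Rightarrow> bool" where
  "order_automorphism Q lt f \<longleftrightarrow>
     bij_betw f Q Q \<and> (\<forall>p\<in>Q. \<forall>q\<in>Q. lt p q \<longrightarrow> lt (f p) (f q))"

lemma right_translation_order_automorphism:
  assumes "quandle Q op" and "right_order Q op lt" and "s \<in> Q"
  shows "order_automorphism Q lt (\<lambda>p. op p s)"
  using quandle_right_translation_bij[OF assms(1,3)] assms(2,3)
  unfolding order_automorphism_def right_order_def by blast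

locale countable_linorder_on =
  fixes Q :: "'a set" and lt :: "'a \<Rightarrow> 'a \<Rightarrow> bool"
  assumes countable: "countable Q"
    and lt_irrefl: "\<And>q. q \<in> Q \<Longrightarrow> \<not> lt q q"
    and lt_trans: "\<And>a b c. a \<in> Q \<Longrightarrow> b \<in> Q \<Longrightarrow> c \<in> Q \<Longrightarrow> lt a b \<Longrightarrow> lt b c \<Longrightarrow> lt a c"
    and lt_total: "\<And>a b. a \<in> Q \<Longrightarrow> b \<in> Q \<Longrightarrow> a \<noteq> b \<Longrightarrow> lt a b \<or> lt b a"

lemma right_order_countable_linorder_on:
  assumes "right_order Q op lt" and "countable Q"
  shows "countable_linorder_on Q lt"
proof
  have irrefl: "\<forall>q\<in>Q. \<not> lt q q"
    using assms(1) unfolding right_order_def by (elim conjE)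
  have trans: "\<forall>a\<in>Q. \<forall>b\<in>Q. \<forall>c\<in>Q. lt a b \<and> lt b c \<longrightarrow> lt a c"
    using assms(1) unfolding right_order_def by (elim conjE)
  have total: "\<forall>a\<in>Q. \<forall>b\<in>Q. a \<noteq> b \<longrightarrow> lt a b \<or> lt b a"
    using assms(1) unfolding right_order_def by (elim conjE)
  show "countable Q" by (rule assms(2))
  show "\<not> lt q q" if "q \<in> Q" for q
    using irrefl that by blast
  show "lt a c" if "a \<in> Q" "b \<in> Q" "c \<in> Q" "lt a b" "lt b c" for a b c
    using trans that by blast
  show "lt a b \<or> lt b a" if "a \<in> Q" "b \<in> Q" "a \<noteq> b" for a b
    using total that by blast
qed

context countable_linorder_on
begin

abbreviation aut :: "('a \<Rightarrow> 'a) \<Rightarrow> bool" where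
  "aut \<equiv> order_automorphism Q lt"

definition weight :: "'a \<Rightarrow> real" where
  "weight q = (1/2) ^ to_nat_on Q q"

definition mass :: "'a set \<Rightarrow> real" where
  "mass A = (\<Sum>\<^sub>\<infinity>p\<in>A. weight p)"

definition below :: "'a \<Rightarrow> 'a set" where
  "below q = {p \<in> Q. lt p q}"

text \<open>The interval \<open>I\<^sub>q\<close> is \<open>[left_end q, left_end q + weight q]\<close>.\<close>

definition left_end :: "'a \<Rightarrow> real" where
  "left_end q = mass (below q)"

definition total_weight :: real where
  "total_weight = mass Q"

lemma weight_pos: "0 < weight q"
  unfolding weight_def by simp

lemma weight_summable:
  assumes "A \<subseteq> Q"
  shows "weight summable_on A"
proof -
  have "summable (\<lambda>n::nat. (1/2::real) ^ n)"
    by (rule summable_geometric) simp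
  then have "(\<lambda>n::nat. (1/2::real) ^ n) summable_on UNIV"
    by (rule summable_nonneg_imp_summable_on) simp
  then have "(\<lambda>n::nat. (1/2::real) ^ n) summable_on to_nat_on Q ` Q"
    by (rule summable_on_subset_banach) simp
  then have "weight summable_on Q"
    by (subst (asm) summable_on_reindex[OF inj_on_to_nat_on[OF countable]])
       (simp add: weight_def[abs_def] o_def)
  then show ?thesis
    using assms by (rule summable_on_subset_banach)
qed

lemma mass_nonneg: "0 \<le> mass A"
  unfolding mass_def by (rule infsum_nonneg) (simp add: less_imp_le weight_pos)

lemma mass_mono:
  assumes "A \<subseteq> B" "B \<subseteq> Q"
  shows "mass A \<le> mass B"
proof -
  have "A \<subseteq> Q" using assms by blast
  then show ?thesis
    unfolding mass_def using weight_pos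
    by (intro infsum_mono2[OF weight_summable weight_summable \<open>A \<subseteq> B\<close> less_imp_le])
       (simp_all add: assms)
qed

lemma mass_Diff:
  assumes "A \<subseteq> B" "B \<subseteq> Q"
  shows "mass (B - A) = mass B - mass A"
proof -
  have "A \<subseteq> Q" using assms by blast
  then show ?thesis
    unfolding mass_def
    by (intro infsum_Diff[OF weight_summable weight_summable \<open>A \<subseteq> B\<close>] assms)
qed

lemma mass_insert:
  assumes "A \<subseteq> Q" "p \<notin> A"
  shows "mass (insert p A) = weight p + mass A"
  unfolding mass_def by (rule infsum_insert[OF weight_summable[OF assms(1)] assms(2)])

lemma mass_le_if_finite_subsets:
  assumes "A \<subseteq> Q" and "0 \<le> c"
    and finite_le: "\<And>F. finite F \<Longrightarrow> F \<noteq> {} \<Longrightarrow> F \<subseteq> A \<Longrightarrow> mass F \<le> c"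
  shows "mass A \<le> c"
  unfolding mass_def
proof (rule infsum_le_finite_sums[OF weight_summable[OF \<open>A \<subseteq> Q\<close>]])
  fix F assume "finite F" "F \<subseteq> A"
  show "sum weight F \<le> c"
  proof (cases "F = {}")
    case True
    then show ?thesis using \<open>0 \<le> c\<close> by simp
  next
    case False
    then have "mass F \<le> c"
      using finite_le \<open>finite F\<close> \<open>F \<subseteq> A\<close> by blast
    then show ?thesis
      using \<open>finite F\<close> by (simp add: mass_def)
  qed
qed

lemma below_subset: "below q \<subseteq> Q"
  unfolding below_def by auto

lemma left_end_nonneg: "0 \<le> left_end q"
  unfolding left_end_def by (rule mass_nonneg)

lemma right_end_eq_mass: "q \<in> Q \<Longrightarrow> left_end q + weight q = mass (insert q (below q))"
  using mass_insert[OF below_subset, of q] lt_irrefl[of q] by (simp add: left_end_def below_def)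

lemma right_end_le_left_end:
  assumes "p \<in> Q" "q \<in> Q" "lt p q"
  shows "left_end p + weight p \<le> left_end q"
proof -
  have "insert p (below p) \<subseteq> below q"
  proof
    fix r assume "r \<in> insert p (below p)"
    then have "r \<in> Q" "r = p \<or> lt r p"
      using assms by (auto simp: below_def)
    then show "r \<in> below q"
      using assms lt_trans[of r p q] by (auto simp: below_def)
  qed
  then show ?thesis
    using right_end_eq_mass[OF \<open>p \<in> Q\<close>] mass_mono[OF _ below_subset]
    by (simp add: left_end_def)
qed

lemma right_end_le_total_weight:
  assumes "q \<in> Q"
  shows "left_end q + weight q \<le> total_weight"
proof -
  have "insert q (below q) \<subseteq> Q"
    using assms below_subset by blast
  then show ?thesis
    unfolding total_weight_def right_end_eq_mass[OF assms] by (rule mass_mono) simp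
qed

lemma left_end_less_iff:
  assumes "p \<in> Q" "q \<in> Q"
  shows "left_end p < left_end q \<longleftrightarrow> lt p q"
proof
  show "lt p q \<Longrightarrow> left_end p < left_end q"
    using right_end_le_left_end[OF assms] weight_pos[of p] by simp
  assume less: "left_end p < left_end q"
  show "lt p q"
  proof (rule ccontr)
    assume "\<not> lt p q"
    then have "p = q \<or> lt q p" using assms lt_total by blast
    then show False
      using less right_end_le_left_end[OF assms(2,1)] weight_pos[of q] by auto
  qed
qed

lemma left_end_inj: "inj_on left_end Q"
proof (rule inj_onI)
  fix p q assume "p \<in> Q" "q \<in> Q" "left_end p = left_end q"
  show "p = q"
  proof (rule ccontr)
    assume "p \<noteq> q"
    then have "lt p q \<or> lt q p"
      using lt_total \<open>p \<in> Q\<close> \<open>q \<in> Q\<close> by blast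
    then show False
      using left_end_less_iff[OF \<open>p \<in> Q\<close> \<open>q \<in> Q\<close>] left_end_less_iff[OF \<open>q \<in> Q\<close> \<open>p \<in> Q\<close>]
        \<open>left_end p = left_end q\<close> by auto
  qed
qed

lemma finite_has_greatest:
  assumes "finite F" "F \<noteq> {}" "F \<subseteq> Q"
  shows "\<exists>m\<in>F. F \<subseteq> insert m (below m)"
proof -
  have "Max (left_end ` F) \<in> left_end ` F"
    using assms by (intro Max_in) auto
  then obtain m where "m \<in> F" and m: "left_end m = Max (left_end ` F)"
    by auto
  have "lt p m" if "p \<in> F" "p \<noteq> m" for p
  proof -
    have "left_end p \<le> left_end m" using m that assms by simp
    moreover have "left_end p \<noteq> left_end m"
      using inj_onD[OF left_end_inj] that \<open>m \<in> F\<close> assms by blast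
    moreover have "p \<in> Q" "m \<in> Q"
      using that \<open>m \<in> F\<close> assms by auto
    ultimately show ?thesis
      using left_end_less_iff[of p m] by simp
  qed
  then show ?thesis
    using \<open>m \<in> F\<close> assms by (intro bexI[of _ m]) (auto simp: below_def)
qed

lemma finite_has_least:
  assumes "finite F" "F \<noteq> {}" "F \<subseteq> Q"
  shows "\<exists>m\<in>F. F \<subseteq> Q - below m"
proof -
  have "Min (left_end ` F) \<in> left_end ` F"
    using assms by (intro Min_in) auto
  then obtain m where "m \<in> F" and m: "left_end m = Min (left_end ` F)"
    by auto
  have "\<not> lt p m" if "p \<in> F" for p
  proof -
    have "left_end m \<le> left_end p" using m that assms by simp
    moreover have "p \<in> Q" "m \<in> Q"
      using that \<open>m \<in> F\<close> assms by auto
    ultimately show ?thesis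
      using left_end_less_iff[of p m] by simp
  qed
  then show ?thesis
    using \<open>m \<in> F\<close> assms by (intro bexI[of _ m]) (auto simp: below_def)
qed

lemma aut_in: "aut f \<Longrightarrow> q \<in> Q \<Longrightarrow> f q \<in> Q"
  unfolding order_automorphism_def bij_betw_def by auto

lemma aut_image: "aut f \<Longrightarrow> f ` Q = Q"
  unfolding order_automorphism_def bij_betw_def by auto

lemma aut_inj: "aut f \<Longrightarrow> inj_on f Q"
  unfolding order_automorphism_def bij_betw_def by auto

lemma aut_less_iff:
  assumes "aut f" "p \<in> Q" "q \<in> Q"
  shows "lt (f p) (f q) \<longleftrightarrow> lt p q"
proof
  assume less: "lt (f p) (f q)"
  show "lt p q"
  proof (rule ccontr)
    assume "\<not> lt p q"
    then have "p = q \<or> lt q p"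
      using assms lt_total by blast
    then have "f p = f q \<or> lt (f q) (f p)"
      using assms unfolding order_automorphism_def by blast
    moreover have "f p \<in> Q" "f q \<in> Q"
      using assms aut_in by auto
    ultimately show False
      using less lt_irrefl[of "f p"] lt_trans[of "f p" "f q" "f p"] by auto
  qed
qed (use assms in \<open>simp add: order_automorphism_def\<close>)

lemma aut_image_below:
  assumes "aut f" "q \<in> Q"
  shows "f ` below q = below (f q)"
proof
  show "f ` below q \<subseteq> below (f q)"
    using assms aut_in unfolding below_def order_automorphism_def by auto
  show "below (f q) \<subseteq> f ` below q"
  proof
    fix p assume p: "p \<in> below (f q)"
    then obtain p' where "p' \<in> Q" "p = f p'"
      using aut_image[OF \<open>aut f\<close>] by (auto simp: below_def)
    moreover have "lt p' q"
      using p calculation aut_less_iff[OF assms(1) \<open>p' \<in> Q\<close> assms(2)] by (simp add: below_def)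
    ultimately show "p \<in> f ` below q"
      by (auto simp: below_def)
  qed
qed

lemma aut_id: "aut id"
  unfolding order_automorphism_def by simp

lemma aut_comp:
  assumes "aut f" "aut g"
  shows "aut (f \<circ> g)"
proof -
  have "bij_betw (f \<circ> g) Q Q"
    using assms bij_betw_trans unfolding order_automorphism_def by blast
  moreover have "lt (f (g p)) (f (g q))" if "p \<in> Q" "q \<in> Q" "lt p q" for p q
    using assms that aut_in unfolding order_automorphism_def by simp
  ultimately show ?thesis
    unfolding order_automorphism_def by simp
qed

lemma aut_inv_into:
  assumes "aut f"
  shows "aut (inv_into Q f)"
proof -
  have bij: "bij_betw (inv_into Q f) Q Q"
    using assms bij_betw_inv_into unfolding order_automorphism_def by blast
  have "lt (inv_into Q f p) (inv_into Q f q)" if "p \<in> Q" "q \<in> Q" "lt p q" for p q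
  proof -
    have "inv_into Q f p \<in> Q" "inv_into Q f q \<in> Q"
      using bij that by (simp_all add: bij_betwE)
    moreover have "f (inv_into Q f p) = p" "f (inv_into Q f q) = q"
      using that aut_image[OF assms] by (simp_all add: f_inv_into_f)
    ultimately show ?thesis
      using aut_less_iff[OF assms, of "inv_into Q f p" "inv_into Q f q"] \<open>lt p q\<close> by simp
  qed
  then show ?thesis
    using bij unfolding order_automorphism_def by blast
qed

lemma mass_image:
  assumes "aut f" "A \<subseteq> Q"
  shows "(\<Sum>\<^sub>\<infinity>p\<in>A. weight (f p)) = mass (f ` A)"
proof -
  have "inj_on f A"
    using assms aut_inj inj_on_subset by blast
  then show ?thesis
    unfolding mass_def by (simp add: infsum_reindex o_def)
qed

lemma weight_comp_summable:
  assumes "aut f" "A \<subseteq> Q"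
  shows "(\<lambda>p. weight (f p)) summable_on A"
proof -
  have "inj_on f A"
    using assms aut_inj inj_on_subset by blast
  moreover have "weight summable_on f ` A"
    using assms aut_in by (intro weight_summable) auto
  ultimately show ?thesis
    by (simp add: summable_on_reindex o_def)
qed

text \<open>A point lying in no \<open>I\<^sub>q\<close> is described by the down-set of intervals on its left.\<close>

definition cuts :: "'a set \<Rightarrow> real \<Rightarrow> bool" where
  "cuts L x \<longleftrightarrow> L \<subseteq> Q \<and> (\<forall>p\<in>L. left_end p + weight p \<le> x) \<and> (\<forall>p\<in>Q - L. x \<le> left_end p)"

lemma interval_or_cut:
  obtains (interval) q t where "q \<in> Q" "0 \<le> t" "t \<le> 1" "x = left_end q + weight q * t"
  | (cut) L where "cuts L x"
proof (cases "\<exists>q\<in>Q. left_end q \<le> x \<and> x \<le> left_end q + weight q")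
  case True
  then obtain q where "q \<in> Q" "left_end q \<le> x" "x \<le> left_end q + weight q" by blast
  moreover define t where "t = (x - left_end q) / weight q"
  ultimately have "0 \<le> t" "t \<le> 1" "x = left_end q + weight q * t"
    using weight_pos[of q] by (simp_all add: divide_le_eq_1_pos)
  with \<open>q \<in> Q\<close> show ?thesis by (rule interval)
next
  case False
  then have "x \<le> left_end p" if "p \<in> Q" "\<not> left_end p + weight p \<le> x" for p
    using that by auto
  then have "cuts {p \<in> Q. left_end p + weight p \<le> x} x"
    unfolding cuts_def by auto
  then show ?thesis by (rule cut)
qed

lemma cuts_below_subset:
  assumes "cuts L x" "p \<in> L"
  shows "below p \<subseteq> L"
proof
  fix q assume q: "q \<in> below p"
  show "q \<in> L"
  proof (rule ccontr)
    assume "q \<notin> L"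
    have "p \<in> Q" "q \<in> Q" "lt q p"
      using assms q by (auto simp: below_def cuts_def)
    then have "left_end q + weight q \<le> left_end p"
      using right_end_le_left_end[of q p] by blast
    moreover have "x \<le> left_end q" "left_end p + weight p \<le> x"
      using assms \<open>q \<in> Q\<close> \<open>q \<notin> L\<close> by (auto simp: cuts_def)
    ultimately show False
      using weight_pos[of p] weight_pos[of q] by linarith
  qed
qed

lemma mass_cuts:
  assumes "L \<subseteq> Q" and down_closed: "\<And>p. p \<in> L \<Longrightarrow> below p \<subseteq> L"
  shows "cuts L (mass L)"
  unfolding cuts_def
proof (intro conjI ballI)
  fix p assume "p \<in> L"
  then have "insert p (below p) \<subseteq> L"
    using down_closed by blast
  moreover have "p \<in> Q" using \<open>p \<in> L\<close> assms by blast
  ultimately show "left_end p + weight p \<le> mass L"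
    using mass_mono[OF _ \<open>L \<subseteq> Q\<close>] right_end_eq_mass by simp
next
  fix p assume p: "p \<in> Q - L"
  have "L \<subseteq> below p"
  proof
    fix q assume "q \<in> L"
    then have "\<not> lt p q" "q \<noteq> p" "q \<in> Q"
      using p assms by (auto simp: below_def)
    then show "q \<in> below p"
      using lt_total[of p q] p by (auto simp: below_def)
  qed
  then show "mass L \<le> left_end p"
    unfolding left_end_def using below_subset by (rule mass_mono)
qed (use assms in simp)

lemma cuts_image:
  assumes "aut f" "cuts L x"
  shows "cuts (f ` L) (mass (f ` L))"
proof (rule mass_cuts)
  have "L \<subseteq> Q" using assms by (simp add: cuts_def)
  then show "f ` L \<subseteq> Q" using assms aut_in by auto
  fix p assume "p \<in> f ` L"
  then obtain p' where "p' \<in> L" "p = f p'" by blast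
  then have "below p = f ` below p'"
    using aut_image_below[OF \<open>aut f\<close>] \<open>L \<subseteq> Q\<close> by auto
  then show "below p \<subseteq> f ` L"
    using cuts_below_subset[OF \<open>cuts L x\<close> \<open>p' \<in> L\<close>] by auto
qed

lemma mass_cut:
  assumes "cuts L x" "0 \<le> x" "x \<le> total_weight"
  shows "mass L = x"
proof -
  have "L \<subseteq> Q" using assms by (simp add: cuts_def)
  have "mass L \<le> x"
  proof (rule mass_le_if_finite_subsets[OF \<open>L \<subseteq> Q\<close> \<open>0 \<le> x\<close>])
    fix F assume "finite F" "F \<noteq> {}" "F \<subseteq> L"
    then obtain m where "m \<in> F" "F \<subseteq> insert m (below m)"
      using finite_has_greatest \<open>L \<subseteq> Q\<close> by blast
    moreover have "m \<in> Q" using \<open>m \<in> F\<close> \<open>F \<subseteq> L\<close> \<open>L \<subseteq> Q\<close> by blast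
    ultimately have "mass F \<le> mass (insert m (below m))"
      using below_subset by (intro mass_mono) auto
    also have "\<dots> = left_end m + weight m"
      using right_end_eq_mass[OF \<open>m \<in> Q\<close>] by simp
    also have "\<dots> \<le> x" using assms \<open>m \<in> F\<close> \<open>F \<subseteq> L\<close> by (auto simp: cuts_def)
    finally show "mass F \<le> x" .
  qed
  moreover have "mass (Q - L) \<le> total_weight - x"
  proof (rule mass_le_if_finite_subsets)
    fix F assume "finite F" "F \<noteq> {}" "F \<subseteq> Q - L"
    then obtain m where "m \<in> F" "F \<subseteq> Q - below m"
      using finite_has_least by blast
    then have "mass F \<le> total_weight - left_end m"
      using mass_mono[of F "Q - below m"] mass_Diff[OF below_subset]
      unfolding total_weight_def left_end_def by auto
    also have "\<dots> \<le> total_weight - x" using assms \<open>m \<in> F\<close> \<open>F \<subseteq> Q - L\<close> by (auto simp: cuts_def)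
    finally show "mass F \<le> total_weight - x" .
  qed (use assms in auto)
  moreover have "mass (Q - L) = total_weight - mass L"
    using mass_Diff[OF \<open>L \<subseteq> Q\<close>] by (simp add: total_weight_def)
  ultimately show ?thesis by linarith
qed

text \<open>The interval \<open>I\<^sub>p\<close> carries the weight of \<open>f p\<close>, spread uniformly over it.\<close>

definition pushed_mass :: "('a \<Rightarrow> 'a) \<Rightarrow> real \<Rightarrow> real" where
  "pushed_mass f x = (\<Sum>\<^sub>\<infinity>p\<in>Q. weight (f p) * max 0 (min 1 ((x - left_end p) / weight p)))"

lemma pushed_mass_summable:
  assumes "aut f" "A \<subseteq> Q"
  shows "(\<lambda>p. weight (f p) * max 0 (min 1 ((x - left_end p) / weight p))) summable_on A"
  by (rule summable_on_comparison_test[OF weight_comp_summable[OF assms]])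
     (auto simp: less_imp_le weight_pos mult_left_le)

lemma pushed_mass_mono:
  assumes "aut f" "x \<le> y"
  shows "pushed_mass f x \<le> pushed_mass f y"
  unfolding pushed_mass_def
proof (rule infsum_mono[OF pushed_mass_summable pushed_mass_summable])
  fix p
  have "(x - left_end p) / weight p \<le> (y - left_end p) / weight p"
    using assms weight_pos[of p] by (simp add: divide_right_mono)
  then show "weight (f p) * max 0 (min 1 ((x - left_end p) / weight p))
      \<le> weight (f p) * max 0 (min 1 ((y - left_end p) / weight p))"
    using weight_pos[of "f p"] by (intro mult_left_mono) auto
qed (use assms in auto)

lemma pushed_mass_cut:
  assumes "aut f" "cuts L x"
  shows "pushed_mass f x = mass (f ` L)"
proof -
  have "pushed_mass f x = (\<Sum>\<^sub>\<infinity>p\<in>L. weight (f p))"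
    unfolding pushed_mass_def
  proof (rule infsum_cong_neutral)
    fix p assume "p \<in> Q - L"
    then have "(x - left_end p) / weight p \<le> 0"
      using assms weight_pos[of p] by (simp add: cuts_def divide_nonpos_pos)
    then show "weight (f p) * max 0 (min 1 ((x - left_end p) / weight p)) = 0" by simp
  next
    fix p assume "p \<in> Q \<inter> L"
    then have "left_end p + weight p \<le> x"
      using assms by (simp add: cuts_def)
    then have "1 \<le> (x - left_end p) / weight p"
      using weight_pos[of p] by (simp add: le_divide_eq_1_pos)
    then show "weight (f p) * max 0 (min 1 ((x - left_end p) / weight p)) = weight (f p)"
      by simp
  qed (use assms in \<open>auto simp: cuts_def\<close>)
  also have "\<dots> = mass (f ` L)"
    using assms by (intro mass_image) (auto simp: cuts_def)
  finally show ?thesis .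
qed

lemma pushed_mass_interval:
  assumes "aut f" "q \<in> Q" "0 \<le> t" "t \<le> 1"
  shows "pushed_mass f (left_end q + weight q * t) = left_end (f q) + weight (f q) * t"
proof -
  define x where "x = left_end q + weight q * t"
  define c where "c p = weight (f p) * max 0 (min 1 ((x - left_end p) / weight p))" for p
  have "x \<le> left_end q + weight q"
    using assms weight_pos[of q] by (simp add: x_def mult_left_le)
  have "pushed_mass f x = (\<Sum>\<^sub>\<infinity>p\<in>insert q (below q). c p)"
    unfolding pushed_mass_def c_def[symmetric]
  proof (rule infsum_cong_neutral)
    fix p assume p: "p \<in> Q - insert q (below q)"
    then have "x \<le> left_end p"
      using lt_total[of p q] right_end_le_left_end[of q p] \<open>q \<in> Q\<close> \<open>x \<le> _\<close>
      by (auto simp: below_def)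
    then show "c p = 0"
      using weight_pos[of p] by (simp add: c_def divide_nonpos_pos)
  qed (use assms below_subset in auto)
  also have "\<dots> = c q + (\<Sum>\<^sub>\<infinity>p\<in>below q. c p)"
    using assms lt_irrefl pushed_mass_summable[OF \<open>aut f\<close> below_subset]
    by (intro infsum_insert) (auto simp: c_def below_def)
  also have "(\<Sum>\<^sub>\<infinity>p\<in>below q. c p) = (\<Sum>\<^sub>\<infinity>p\<in>below q. weight (f p))"
  proof (rule infsum_cong)
    fix p assume "p \<in> below q"
    then have "left_end p + weight p \<le> left_end q"
      using right_end_le_left_end[of p q] assms by (simp add: below_def)
    moreover have "left_end q \<le> x"
      using assms weight_pos[of q] by (simp add: x_def)
    ultimately have "1 \<le> (x - left_end p) / weight p"
      using weight_pos[of p] by (simp add: le_divide_eq_1_pos)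
    then show "c p = weight (f p)" by (simp add: c_def)
  qed
  also have "\<dots> = left_end (f q)"
    using assms mass_image below_subset aut_image_below by (simp add: left_end_def)
  finally show ?thesis
    using assms weight_pos[of q] by (simp add: x_def c_def)
qed

definition realization :: "('a \<Rightarrow> 'a) \<Rightarrow> real \<Rightarrow> real" where
  "realization f x = pushed_mass f x + min x 0 + max (x - total_weight) 0"

lemma realization_outside:
  assumes "aut f" "x \<le> 0 \<or> total_weight \<le> x"
  shows "realization f x = x"
  using assms(2)
proof
  assume "x \<le> 0"
  have "x \<le> left_end p" for p
    using left_end_nonneg[of p] \<open>x \<le> 0\<close> by linarith
  then have "cuts {} x"
    by (simp add: cuts_def)
  then show ?thesis
    using pushed_mass_cut[OF \<open>aut f\<close>] \<open>x \<le> 0\<close> mass_nonneg[of Q]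
    by (simp add: realization_def total_weight_def mass_def)
next
  assume "total_weight \<le> x"
  have "left_end p + weight p \<le> x" if "p \<in> Q" for p
    using right_end_le_total_weight[OF that] \<open>total_weight \<le> x\<close> by linarith
  then have "cuts Q x"
    by (simp add: cuts_def)
  then show ?thesis
    using pushed_mass_cut[OF \<open>aut f\<close>] \<open>total_weight \<le> x\<close> mass_nonneg[of Q] aut_image[OF \<open>aut f\<close>]
    by (simp add: realization_def total_weight_def)
qed

lemma realization_interval:
  assumes "aut f" "q \<in> Q" "0 \<le> t" "t \<le> 1"
  shows "realization f (left_end q + weight q * t) = left_end (f q) + weight (f q) * t"
proof -
  have "0 \<le> left_end q + weight q * t"
    using assms left_end_nonneg[of q] weight_pos[of q] by simp
  moreover have "weight q * t \<le> weight q"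
    using assms weight_pos[of q] by (simp add: mult_left_le)
  then have "left_end q + weight q * t \<le> total_weight"
    using right_end_le_total_weight[OF \<open>q \<in> Q\<close>] by linarith
  ultimately show ?thesis
    using pushed_mass_interval[OF assms] by (simp add: realization_def)
qed

lemma realization_cut:
  assumes "aut f" "cuts L x" "0 \<le> x" "x \<le> total_weight"
  shows "realization f x = mass (f ` L)"
  using assms pushed_mass_cut by (simp add: realization_def)

lemma realization_cases:
  obtains (outside) "x \<le> 0 \<or> total_weight \<le> x"
  | (interval) q t where "q \<in> Q" "0 \<le> t" "t \<le> 1" "x = left_end q + weight q * t"
  | (cut) L where "cuts L x" "0 \<le> x" "x \<le> total_weight"
proof (cases "x \<le> 0 \<or> total_weight \<le> x")
  case True
  then show ?thesis by (rule outside)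
next
  case False
  show ?thesis
  proof (cases x rule: interval_or_cut)
    case (interval q t)
    then show ?thesis by (rule that(2))
  next
    case (cut L)
    then show ?thesis
      using False by (intro that(3)) auto
  qed
qed

lemma realization_mono:
  assumes "aut f"
  shows "mono (realization f)"
  using pushed_mass_mono[OF assms]
  by (intro monoI) (simp add: realization_def add_mono)

lemma realization_comp:
  assumes "aut f" "aut g"
  shows "realization f \<circ> realization g = realization (f \<circ> g)"
proof
  fix x
  have fg: "aut (f \<circ> g)" using assms by (rule aut_comp)
  show "(realization f \<circ> realization g) x = realization (f \<circ> g) x"
  proof (cases x rule: realization_cases)
    case outside
    then show ?thesis using assms fg by (simp add: realization_outside)
  next
    case (interval q t)
    have "realization g x = left_end (g q) + weight (g q) * t"
      using realization_interval[OF assms(2) interval(1-3)] interval(4) by simp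
    then show ?thesis
      using realization_interval[OF assms(1) aut_in[OF assms(2) interval(1)] interval(2,3)]
        realization_interval[OF fg interval(1-3)] interval(4) by simp
  next
    case (cut L)
    have image_cut: "cuts (g ` L) (mass (g ` L))"
      using assms(2) cut(1) by (rule cuts_image)
    then have "mass (g ` L) \<le> total_weight"
      unfolding total_weight_def by (intro mass_mono) (simp_all add: cuts_def)
    then have "realization f (mass (g ` L)) = mass (f ` g ` L)"
      using realization_cut[OF assms(1) image_cut mass_nonneg] by simp
    moreover have "realization g x = mass (g ` L)"
      using realization_cut[OF assms(2) cut] .
    moreover have "realization (f \<circ> g) x = mass ((f \<circ> g) ` L)"
      using realization_cut[OF fg cut] .
    ultimately show ?thesis by (simp add: image_comp)
  qed
qed

lemma realization_id: "realization id = id"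
proof
  fix x
  show "realization id x = id x"
  proof (cases x rule: realization_cases)
    case outside
    then show ?thesis using aut_id by (simp add: realization_outside)
  next
    case (interval q t)
    then show ?thesis using realization_interval[OF aut_id interval(1-3)] by simp
  next
    case (cut L)
    then show ?thesis using realization_cut[OF aut_id cut] mass_cut[OF cut] by simp
  qed
qed

lemma realization_cong:
  "(\<And>p. p \<in> Q \<Longrightarrow> f p = g p) \<Longrightarrow> realization f = realization g"
  unfolding realization_def pushed_mass_def by (intro ext) (simp cong: infsum_cong)

lemma realization_comp_inv:
  assumes "aut f"
  shows "realization f \<circ> realization (inv_into Q f) = id"
    and "realization (inv_into Q f) \<circ> realization f = id"
proof -
  have "realization f \<circ> realization (inv_into Q f) = realization (f \<circ> inv_into Q f)"
    by (rule realization_comp[OF assms aut_inv_into[OF assms]])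
  also have "\<dots> = realization id"
    using aut_image[OF assms] by (intro realization_cong) (simp add: f_inv_into_f)
  finally show "realization f \<circ> realization (inv_into Q f) = id"
    by (simp add: realization_id)
  have "realization (inv_into Q f) \<circ> realization f = realization (inv_into Q f \<circ> f)"
    by (rule realization_comp[OF aut_inv_into[OF assms] assms])
  also have "\<dots> = realization id"
    using aut_inj[OF assms] by (intro realization_cong) simp
  finally show "realization (inv_into Q f) \<circ> realization f = id"
    by (simp add: realization_id)
qed

lemma inv_realization_inv_into:
  assumes "aut f"
  shows "inv (realization (inv_into Q f)) = realization f"
  using realization_comp_inv[OF assms] by (intro inv_unique_comp)

lemma realization_Homeo_plus:
  assumes "aut f"
  shows "realization f \<in> Homeo_plus"
proof (rule Homeo_plusI)
  show "mono (realization f)" "mono (realization (inv_into Q f))"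
    using assms aut_inv_into by (simp_all add: realization_mono)
  show "realization f (realization (inv_into Q f) x) = x"
    and "realization (inv_into Q f) (realization f x) = x" for x
    using realization_comp_inv[OF assms] by (simp_all add: fun_eq_iff)
qed

lemma realization_eqD:
  assumes "aut f" "aut g" "realization f = realization g" "q \<in> Q"
  shows "f q = g q"
proof -
  have "left_end (f q) = realization f (left_end q)"
    using realization_interval[OF assms(1,4), of 0] by simp
  also have "\<dots> = left_end (g q)"
    using realization_interval[OF assms(2,4), of 0] assms(3) by simp
  finally have "left_end (f q) = left_end (g q)" .
  then show ?thesis
    using aut_in[OF assms(1,4)] aut_in[OF assms(2,4)] by (rule inj_onD[OF left_end_inj])
qed

end

locale right_ordered_quandle = countable_linorder_on Q lt for Q :: "'a set" and lt +
  fixes op :: "'a \<Rightarrow> 'a \<Rightarrow> 'a"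
  assumes quandle: "quandle Q op" and right_order: "right_order Q op lt"
begin

text \<open>Inverses, because the conjugation law composes the right translations in reverse order.\<close>

definition quandle_realization :: "'a \<Rightarrow> real \<Rightarrow> real" where
  "quandle_realization s = realization (inv_into Q (\<lambda>p. op p s))"

lemma aut_right_translation: "s \<in> Q \<Longrightarrow> aut (\<lambda>p. op p s)"
  using quandle right_order by (rule right_translation_order_automorphism)

lemma quandle_realization_Homeo_plus: "s \<in> Q \<Longrightarrow> quandle_realization s \<in> Homeo_plus"
  unfolding quandle_realization_def
  by (intro realization_Homeo_plus aut_inv_into aut_right_translation)

lemma inv_quandle_realization:
  "s \<in> Q \<Longrightarrow> inv (quandle_realization s) = realization (\<lambda>p. op p s)"
  unfolding quandle_realization_def
  by (intro inv_realization_inv_into aut_right_translation)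

lemma quandle_realization_op:
  assumes "r \<in> Q" "s \<in> Q"
  shows "quandle_realization (op r s)
           = inv (quandle_realization s) \<circ> quandle_realization r \<circ> quandle_realization s"
proof -
  define R where "R s = (\<lambda>p. op p s)" for s
  have aut: "aut (R s)" "aut (inv_into Q (R s))" if "s \<in> Q" for s
    unfolding R_def using that by (simp_all add: aut_right_translation aut_inv_into)
  have "inv (quandle_realization s) \<circ> quandle_realization r \<circ> quandle_realization s
      = realization (R s) \<circ> realization (inv_into Q (R r)) \<circ> realization (inv_into Q (R s))"
    by (subst inv_quandle_realization[OF \<open>s \<in> Q\<close>]) (simp only: quandle_realization_def R_def)
  also have "\<dots> = realization (R s \<circ> inv_into Q (R r)) \<circ> realization (inv_into Q (R s))"
    by (simp only: realization_comp[OF aut(1)[OF \<open>s \<in> Q\<close>] aut(2)[OF \<open>r \<in> Q\<close>]])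
  also have "\<dots> = realization (R s \<circ> inv_into Q (R r) \<circ> inv_into Q (R s))"
    using assms aut by (intro realization_comp aut_comp)
  also have "\<dots> = quandle_realization (op r s)"
    unfolding quandle_realization_def using quandle_inv_right_translation_op[OF quandle assms]
    by (intro realization_cong) (simp add: R_def)
  finally show ?thesis by simp
qed

lemma inj_on_quandle_realization:
  assumes "weak_latin Q op"
  shows "inj_on quandle_realization Q"
proof (rule inj_onI)
  fix r s assume "r \<in> Q" "s \<in> Q" "quandle_realization r = quandle_realization s"
  then have same: "realization (\<lambda>p. op p r) = realization (\<lambda>p. op p s)"
    by (metis inv_quandle_realization)
  have "op p r = op p s" if "p \<in> Q" for p
    using aut_right_translation[OF \<open>r \<in> Q\<close>] aut_right_translation[OF \<open>s \<in> Q\<close>] same that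
    by (rule realization_eqD)
  moreover obtain q where "q \<in> Q" "op q r = op q s \<longrightarrow> r = s"
    using assms \<open>r \<in> Q\<close> \<open>s \<in> Q\<close> unfolding weak_latin_def by blast
  ultimately show "r = s" by simp
qed

end

lemma right_ordered_quandleI:
  assumes "quandle Q op" "countable Q" "right_order Q op lt"
  shows "right_ordered_quandle Q lt op"
  using right_order_countable_linorder_on[OF assms(3,2)] assms(1,3)
  by (simp add: right_ordered_quandle_def right_ordered_quandle_axioms_def)

theorem lemma3p5:
  fixes Q :: "'a set" and op :: "'a \<Rightarrow> 'a \<Rightarrow> 'a" and lt :: "'a \<Rightarrow> 'a \<Rightarrow> bool"
  assumes "quandle Q op" and "countable Q" and "weak_latin Q op"
    and "right_order Q op lt"
  shows "\<exists>\<rho> :: 'a \<Rightarrow> (real \<Rightarrow> real).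
           (\<forall>q\<in>Q. \<rho> q \<in> Homeo_plus) \<and> inj_on \<rho> Q \<and>
           (\<forall>r\<in>Q. \<forall>s\<in>Q. \<rho> (op r s) = inv (\<rho> s) \<circ> \<rho> r \<circ> \<rho> s)"
proof -
  interpret right_ordered_quandle Q lt op
    using assms(1,2,4) by (rule right_ordered_quandleI)
  show ?thesis
    using quandle_realization_Homeo_plus inj_on_quandle_realization[OF assms(3)]
      quandle_realization_op
    by (intro exI[of _ quandle_realization]) blast
qed

end
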